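(* Suppose Assumption D holds. Let $P\in\Delta(\Theta,\mathcal{B})$, $\eta>0$, let $\pi:\Theta\to\mathbb{R}$ be bounded and measurable, let $\mathcal{E}$ be a $\sigma$-algebra, and let $\bar\pi:=\mathbb{E}_P[\pi\mid\mathcal{E}]$. Then $$\inf_Q\{\mathbb{E}_Q[\bar\pi]:D(Q\|P)\le\eta\}\ \ge\ \inf_Q\{\mathbb{E}_Q[\pi]:D(Q\|P)\le\eta\},$$ where $Q$ ranges over $\Delta(\Theta,\mathcal{B})$.
   Context: $\Theta=[\underline\theta,\bar\theta]\subset\mathbb{R}$ ($0<\underline\theta<\bar\theta$) with Borel $\sigma$-algebra $\mathcal{B}$; "$\sigma$-algebra" means a sub-$\sigma$-algebra of $\mathcal{B}$; $\Delta(\Theta,\mathcal{A})$ is the set of probability measures on $(\Theta,\mathcal{A})$; $P_{\mathcal{E}}$ is the restriction of $P$ to $\mathcal{E}$. A divergence $D$ assigns to each pair $Q,P$ of probability measures on a common $\sigma$-algebra a number $D(Q\|P)\in[0,\infty]$. Assumption D: for every $\sigma$-algebra $\mathcal{A}$ and $P,Q\in\Delta(\Theta,\mathcal{A})$: (D1) $D(Q\|P)=0$ if $Q=P$; (D2) if $Q\ll P$ and $dQ/dP$ is bounded, $\epsilon\mapsto D(\epsilon Q+(1-\epsilon)P\|P)$ is continuous on $[0,1]$; (D3) $D(Q\|P)<\infty$ implies $Q\ll P$; (D4) $D(Q_{\mathcal{E}}\|P_{\mathcal{E}})\le D(Q\|P)$ for every sub-$\sigma$-algebra $\mathcal{E}\subset\mathcal{A}$;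 (D5) $D(Q_{\mathcal{E}}\|P_{\mathcal{E}})=D(Q\|P)$ whenever $dQ_{\mathcal{E}}/dP_{\mathcal{E}}=dQ/dP$ $P$-a.e. *)

theory Defs
  imports "HOL-Probability.Probability"
begin

definition Borel_Theta :: "real \<Rightarrow> real \<Rightarrow> real set set" where
  "Borel_Theta a b = sets (restrict_space borel {a..b})"

definition is_sigma_alg :: "real \<Rightarrow> real \<Rightarrow> real set set \<Rightarrow> bool" where
  "is_sigma_alg a b A \<longleftrightarrow> sigma_algebra {a..b} A \<and> A \<subseteq> Borel_Theta a b"

definition Delta :: "real \<Rightarrow> real \<Rightarrow> real set set \<Rightarrow> real measure set" where
  "Delta a b A = {Q. prob_space Q \<and> space Q = {a..b} \<and> sets Q = A}"

definition restr :: "real measure \<Rightarrow> real set set \<Rightarrow> real measure" where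
  "restr P E = measure_of (space P) E (emeasure P)"

definition mix :: "real \<Rightarrow> real measure \<Rightarrow> real measure \<Rightarrow> real measure" where
  "mix e Q P = measure_of (space P) (sets P)
      (\<lambda>S. ennreal e * emeasure Q S + ennreal (1 - e) * emeasure P S)"

text \<open>Assumption D for a divergence D (a function of two measures on a common
  sigma-algebra, carried by the measures themselves).\<close>
definition assumption_D :: "real \<Rightarrow> real \<Rightarrow> (real measure \<Rightarrow> real measure \<Rightarrow> ennreal) \<Rightarrow> bool" where
  "assumption_D a b D \<longleftrightarrow>
    (\<forall>A. is_sigma_alg a b A \<longrightarrow> (\<forall>P\<in>Delta a b A. \<forall>Q\<in>Delta a b A.
       (Q = P \<longrightarrow> D Q P = 0)
     \<and> ((absolutely_continuous P Q \<and> (\<exists>C::real. AE x in P. RN_deriv P Q x \<le> ennreal C))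
          \<longrightarrow> continuous_on {0..1} (\<lambda>e. D (mix e Q P) P))
     \<and> (D Q P < \<infinity> \<longrightarrow> absolutely_continuous P Q)
     \<and> (\<forall>E. is_sigma_alg a b E \<and> E \<subseteq> A \<longrightarrow> D (restr Q E) (restr P E) \<le> D Q P)
     \<and> (\<forall>E. is_sigma_alg a b E \<and> E \<subseteq> A \<and> absolutely_continuous P Q \<and>
            (AE x in P. RN_deriv (restr P E) (restr Q E) x = RN_deriv P Q x)
            \<longrightarrow> D (restr Q E) (restr P E) = D Q P)))"

end

(*
  Given a feasible Q, let Q' be the measure with dQ'/dP = dQ_E/dP_E.  It agrees with Q on E and
  its density is E-measurable, so by (D5) and (D4)
    D(Q'||P) = D(Q'_E||P_E) = D(Q_E||P_E) <= D(Q||P),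
  i.e. Q' is feasible as well.  Since the density is E-measurable, the defining property of the
  conditional expectation gives E_Q'[pi] = E_P[(dQ_E/dP_E) pi] = E_P[(dQ_E/dP_E) pi_bar] = E_Q[pi_bar].
  Hence every value of the left-hand infimum is a value of the right-hand one.
*)
theory Submission
  imports Defs
begin

definition subalg_RN_deriv :: "'a measure \<Rightarrow> 'a measure \<Rightarrow> 'a measure \<Rightarrow> 'a \<Rightarrow> real" where
  "subalg_RN_deriv M F Q x = enn2real (RN_deriv (restr_to_subalg M F) (restr_to_subalg Q F) x)"

text \<open>Passing through enn2real is harmless: dQ_F/dM_F is finite almost everywhere.\<close>
definition coarsen :: "'a measure \<Rightarrow> 'a measure \<Rightarrow> 'a measure \<Rightarrow> 'a measure" where
  "coarsen M F Q = density M (\<lambda>x. ennreal (subalg_RN_deriv M F Q x))"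

lemma space_coarsen [simp]: "space (coarsen M F Q) = space M"
  and sets_coarsen [simp]: "sets (coarsen M F Q) = sets M"
  by (simp_all add: coarsen_def)

context finite_measure_subalgebra
begin

lemma borel_measurable_subalg_RN_deriv_F [measurable]: "subalg_RN_deriv M F Q \<in> borel_measurable F"
proof -
  have "RN_deriv (restr_to_subalg M F) (restr_to_subalg Q F) \<in> borel_measurable F"
    by (rule measurable_in_subalg'[OF subalg borel_measurable_RN_deriv])
  then show ?thesis
    unfolding subalg_RN_deriv_def by measurable
qed

lemma borel_measurable_subalg_RN_deriv_M [measurable]: "subalg_RN_deriv M F Q \<in> borel_measurable M"
  by (rule measurable_from_subalg[OF subalg borel_measurable_subalg_RN_deriv_F])

lemma finite_measure_restr_to_subalg_self: "finite_measure (restr_to_subalg M F)"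
  by (intro finite_measure_restr_to_subalg subalg) unfold_locales

lemma absolutely_continuous_coarsen: "absolutely_continuous M (coarsen M F Q)"
  unfolding coarsen_def by (rule absolutely_continuousI_density) simp

context
  fixes Q :: "'a measure"
  assumes Q_finite: "finite_measure Q" and sets_Q: "sets Q = sets M"
    and Q_ac: "absolutely_continuous M Q"
begin

lemma space_Q: "space Q = space M"
  using sets_Q by (rule sets_eq_imp_space_eq)

lemma subalgebra_Q: "subalgebra Q F"
  using subalg space_Q sets_Q by (simp add: subalgebra_def)

lemma absolutely_continuous_restr_to_subalg:
  "absolutely_continuous (restr_to_subalg M F) (restr_to_subalg Q F)"
  using Q_ac unfolding absolutely_continuous_def
  by (auto simp: null_sets_restr_to_subalg[OF subalg] null_sets_restr_to_subalg[OF subalgebra_Q])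

lemma RN_deriv_restr_to_subalg_eq:
  "AE x in restr_to_subalg M F.
     RN_deriv (restr_to_subalg M F) (restr_to_subalg Q F) x = ennreal (subalg_RN_deriv M F Q x)"
proof -
  interpret MF: finite_measure "restr_to_subalg M F" by (rule finite_measure_restr_to_subalg_self)
  have "AE x in restr_to_subalg M F. RN_deriv (restr_to_subalg M F) (restr_to_subalg Q F) x \<noteq> \<infinity>"
    by (intro MF.RN_deriv_finite absolutely_continuous_restr_to_subalg finite_measure.sigma_finite_measure
          finite_measure_restr_to_subalg subalgebra_Q Q_finite)
       (simp add: sets_restr_to_subalg subalg subalgebra_Q)
  then show ?thesis
    unfolding subalg_RN_deriv_def by eventually_elim (simp add: less_top)
qed

lemma density_subalg_RN_deriv:
  "density (restr_to_subalg M F) (\<lambda>x. ennreal (subalg_RN_deriv M F Q x)) = restr_to_subalg Q F"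
proof -
  interpret MF: finite_measure "restr_to_subalg M F" by (rule finite_measure_restr_to_subalg_self)
  have "density (restr_to_subalg M F) (\<lambda>x. ennreal (subalg_RN_deriv M F Q x))
      = density (restr_to_subalg M F) (RN_deriv (restr_to_subalg M F) (restr_to_subalg Q F))"
    using RN_deriv_restr_to_subalg_eq
    by (intro density_cong) (auto intro: measurable_in_subalg[OF subalg] elim: AE_mp)
  also have "\<dots> = restr_to_subalg Q F"
    by (intro MF.density_RN_deriv absolutely_continuous_restr_to_subalg)
       (simp add: sets_restr_to_subalg subalg subalgebra_Q)
  finally show ?thesis .
qed

lemma emeasure_coarsen:
  assumes A: "A \<in> sets F"
  shows "emeasure (coarsen M F Q) A = emeasure Q A"
proof -
  have "A \<in> sets M" using A subalg by (auto simp: subalgebra_def)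
  then have "emeasure (coarsen M F Q) A = (\<integral>\<^sup>+ x. ennreal (subalg_RN_deriv M F Q x) * indicator A x \<partial>M)"
    unfolding coarsen_def by (intro emeasure_density measurable_from_subalg[OF subalg]) simp_all
  also have "\<dots> = (\<integral>\<^sup>+ x. ennreal (subalg_RN_deriv M F Q x) * indicator A x \<partial>restr_to_subalg M F)"
    using A by (intro nn_integral_subalgebra2[OF subalg, symmetric]) simp
  also have "\<dots> = emeasure (restr_to_subalg Q F) A"
    unfolding density_subalg_RN_deriv[symmetric] using A
    by (subst emeasure_density) (auto intro: measurable_in_subalg[OF subalg] simp: sets_restr_to_subalg[OF subalg])
  also have "\<dots> = emeasure Q A"
    by (rule emeasure_restr_to_subalg[OF subalgebra_Q A])
  finally show ?thesis .
qed

lemma restr_to_subalg_coarsen: "restr_to_subalg (coarsen M F Q) F = restr_to_subalg Q F"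
proof -
  have space_F: "space F = space M" and "sets F \<subseteq> sets M"
    using subalg by (auto simp: subalgebra_def)
  then have "sets F \<subseteq> Pow (space M)"
    using sets.sets_into_space by blast
  moreover have "sigma_sets (space M) (sets F) = sets F"
    using space_F by (metis sets.sigma_sets_eq)
  ultimately show ?thesis
    unfolding restr_to_subalg_def by (auto intro: measure_of_eq simp: space_Q emeasure_coarsen)
qed

lemma RN_deriv_coarsen:
  "AE x in M. RN_deriv (restr_to_subalg M F) (restr_to_subalg (coarsen M F Q) F) x
              = RN_deriv M (coarsen M F Q) x"
proof -
  have "AE x in M. ennreal (subalg_RN_deriv M F Q x) = RN_deriv M (coarsen M F Q) x"
    unfolding coarsen_def
    by (intro RN_deriv_unique) simp_all
  moreover have "AE x in M. RN_deriv (restr_to_subalg M F) (restr_to_subalg Q F) x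
                            = ennreal (subalg_RN_deriv M F Q x)"
    by (rule AE_restr_to_subalg[OF subalg RN_deriv_restr_to_subalg_eq])
  ultimately show ?thesis
    unfolding restr_to_subalg_coarsen by eventually_elim simp
qed

lemma prob_space_coarsen:
  assumes "prob_space Q"
  shows "prob_space (coarsen M F Q)"
proof (rule prob_spaceI)
  have "space M \<in> sets F"
    using subalg by (metis sets.top subalgebra_def)
  then show "emeasure (coarsen M F Q) (space (coarsen M F Q)) = 1"
    using prob_space.emeasure_space_1[OF assms] by (simp add: emeasure_coarsen space_Q)
qed

lemma integral_coarsen:
  assumes f: "f \<in> borel_measurable M" and int_f: "integrable (coarsen M F Q) f"
  shows "(\<integral>x. f x \<partial>coarsen M F Q) = (\<integral>x. real_cond_exp M F f x \<partial>Q)"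
proof -
  let ?g = "subalg_RN_deriv M F Q"
  have g_nonneg: "\<And>x. 0 \<le> ?g x"
    by (simp add: subalg_RN_deriv_def)
  have int_gf: "integrable M (\<lambda>x. ?g x * f x)"
    using int_f f unfolding coarsen_def by (subst (asm) integrable_density) (simp_all add: g_nonneg)
  have "(\<integral>x. f x \<partial>coarsen M F Q) = (\<integral>x. ?g x * f x \<partial>M)"
    unfolding coarsen_def using f by (subst integral_density) (simp_all add: g_nonneg)
  also have "\<dots> = (\<integral>x. ?g x * real_cond_exp M F f x \<partial>M)"
    by (rule real_cond_exp_intg(2)[OF int_gf borel_measurable_subalg_RN_deriv_F f, symmetric])
  also have "\<dots> = (\<integral>x. ?g x * real_cond_exp M F f x \<partial>restr_to_subalg M F)"
    by (rule integral_subalgebra2[OF subalg, symmetric]) simp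
  also have "\<dots> = (\<integral>x. real_cond_exp M F f x \<partial>restr_to_subalg Q F)"
    unfolding density_subalg_RN_deriv[symmetric]
    by (subst integral_density) (auto intro: measurable_in_subalg[OF subalg] simp: g_nonneg)
  also have "\<dots> = (\<integral>x. real_cond_exp M F f x \<partial>Q)"
    by (rule integral_subalgebra2[OF subalgebra_Q borel_measurable_cond_exp])
  finally show ?thesis .
qed

end

end

lemma sets_restr: "sigma_algebra (space M) E \<Longrightarrow> sets (restr M E) = E"
  by (simp add: restr_def sigma_algebra.sets_measure_of_eq)

lemma space_restr [simp]: "space (restr M E) = space M"
  by (simp add: restr_def space_measure_of_conv)

lemma restr_to_subalg_restr:
  "sigma_algebra (space M) E \<Longrightarrow> restr_to_subalg N (restr M E) = restr N E"
  by (simp only: restr_to_subalg_def sets_restr) (simp add: restr_def)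

lemma finite_measure_subalgebra_restr:
  assumes "finite_measure M" "sigma_algebra (space M) E" "E \<subseteq> sets M"
  shows "finite_measure_subalgebra M (restr M E)"
  using assms unfolding finite_measure_subalgebra_def finite_measure_subalgebra_axioms_def
  by (simp add: subalgebra_def sets_restr)

lemma is_sigma_alg_Borel_Theta: "is_sigma_alg a b (Borel_Theta a b)"
  using sets.sigma_algebra_axioms[of "restrict_space borel {a..b}"]
  by (simp add: is_sigma_alg_def Borel_Theta_def space_restrict_space)

lemma measurable_Borel_Theta:
  "sets M = Borel_Theta a b \<Longrightarrow> measurable M N = measurable (restrict_space borel {a..b}) N"
  by (rule measurable_cong_sets) (simp_all add: Borel_Theta_def)

lemma divergence_self_eq_0:
  "assumption_D a b D \<Longrightarrow> P \<in> Delta a b (Borel_Theta a b) \<Longrightarrow> D P P = 0"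
  using is_sigma_alg_Borel_Theta unfolding assumption_D_def by blast

lemma absolutely_continuous_if_divergence_finite:
  "assumption_D a b D \<Longrightarrow> P \<in> Delta a b (Borel_Theta a b) \<Longrightarrow> Q \<in> Delta a b (Borel_Theta a b)
    \<Longrightarrow> D Q P < \<infinity> \<Longrightarrow> absolutely_continuous P Q"
  using is_sigma_alg_Borel_Theta unfolding assumption_D_def by blast

context
  fixes a b C :: real and Q :: "real measure" and f :: "real \<Rightarrow> real"
  assumes Q: "Q \<in> Delta a b (Borel_Theta a b)"
    and f: "f \<in> borel_measurable (restrict_space borel {a..b})"
    and f_bounded: "\<forall>x\<in>{a..b}. \<bar>f x\<bar> \<le> C"
begin

lemma integrable_bounded_Delta: "integrable Q f"
proof -
  interpret prob_space Q
    using Q by (simp add: Delta_def)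
  show ?thesis
    using Q f f_bounded
    by (intro integrable_const_bound[where B=C] AE_I2) (auto simp: Delta_def measurable_Borel_Theta)
qed

lemma integral_ge_neg_bound_Delta: "- C \<le> integral\<^sup>L Q f"
proof -
  interpret prob_space Q
    using Q by (simp add: Delta_def)
  have "- C \<le> f x" if "x \<in> space Q" for x
    using Q f_bounded[rule_format, of x] that by (simp add: Delta_def abs_le_iff)
  then show ?thesis
    by (intro integral_ge_const integrable_bounded_Delta AE_I2)
qed

end

context
  fixes a b :: real and P :: "real measure" and E :: "real set set"
  assumes P: "P \<in> Delta a b (Borel_Theta a b)" and E: "is_sigma_alg a b E"
begin

lemma finite_measure_subalgebra_restr_Delta: "finite_measure_subalgebra P (restr P E)"
proof (rule finite_measure_subalgebra_restr)
  show "finite_measure P"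
    using P by (simp add: Delta_def prob_space_def)
  show "sigma_algebra (space P) E" and "E \<subseteq> sets P"
    using P E by (simp_all add: Delta_def is_sigma_alg_def)
qed

lemma coarsen_mem_Delta:
  assumes Q: "Q \<in> Delta a b (Borel_Theta a b)" and ac: "absolutely_continuous P Q"
  shows "coarsen P (restr P E) Q \<in> Delta a b (Borel_Theta a b)"
proof -
  interpret finite_measure_subalgebra P "restr P E"
    by (rule finite_measure_subalgebra_restr_Delta)
  have "prob_space Q" "sets Q = sets P"
    using P Q by (simp_all add: Delta_def)
  then have "prob_space (coarsen P (restr P E) Q)"
    using ac by (intro prob_space_coarsen) (simp_all add: prob_space_def)
  then show ?thesis
    using P by (simp add: Delta_def)
qed

lemma divergence_coarsen_le:
  assumes D: "assumption_D a b D" and Q: "Q \<in> Delta a b (Borel_Theta a b)" and DQ: "D Q P < \<infinity>"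
  shows "D (coarsen P (restr P E) Q) P \<le> D Q P"
proof -
  let ?Q' = "coarsen P (restr P E) Q"
  interpret finite_measure_subalgebra P "restr P E"
    by (rule finite_measure_subalgebra_restr_Delta)
  have sigma_E: "sigma_algebra (space P) E" and E_sub: "E \<subseteq> Borel_Theta a b"
    using P E by (simp_all add: Delta_def is_sigma_alg_def)
  have D_P: "\<And>Q. Q \<in> Delta a b (Borel_Theta a b) \<Longrightarrow>
        D (restr Q E) (restr P E) \<le> D Q P
    \<and> (absolutely_continuous P Q \<and> (AE x in P. RN_deriv (restr P E) (restr Q E) x = RN_deriv P Q x)
         \<longrightarrow> D (restr Q E) (restr P E) = D Q P)"
    using D P E E_sub is_sigma_alg_Borel_Theta unfolding assumption_D_def by blast
  have ac: "absolutely_continuous P Q"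
    using absolutely_continuous_if_divergence_finite[OF D P Q DQ] .
  have fin_Q: "finite_measure Q" and sets_Q: "sets Q = sets P"
    using P Q by (simp_all add: Delta_def prob_space_def)
  have "D ?Q' P = D (restr ?Q' E) (restr P E)"
    using D_P[OF coarsen_mem_Delta[OF Q ac]] absolutely_continuous_coarsen
      RN_deriv_coarsen[OF fin_Q sets_Q ac]
    unfolding restr_to_subalg_restr[OF sigma_E] by simp
  also have "\<dots> = D (restr Q E) (restr P E)"
    using restr_to_subalg_coarsen[OF fin_Q sets_Q ac] unfolding restr_to_subalg_restr[OF sigma_E]
    by simp
  also have "\<dots> \<le> D Q P"
    using D_P[OF Q] by blast
  finally show ?thesis .
qed

end

theorem proposition2:
  fixes a b :: real and D :: "real measure \<Rightarrow> real measure \<Rightarrow> ennreal"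
    and P :: "real measure" and \<eta> :: real and \<pi> :: "real \<Rightarrow> real" and E :: "real set set"
  assumes "0 < a" "a < b"
    and "assumption_D a b D"
    and "P \<in> Delta a b (Borel_Theta a b)"
    and "\<eta> > 0"
    and "\<pi> \<in> borel_measurable (restrict_space borel {a..b})"
    and "\<exists>C. \<forall>x\<in>{a..b}. \<bar>\<pi> x\<bar> \<le> C"
    and "is_sigma_alg a b E"
  shows "(INF Q\<in>{Q\<in>Delta a b (Borel_Theta a b). D Q P \<le> ennreal \<eta>}.
            integral\<^sup>L Q (real_cond_exp P (restr P E) \<pi>))
         \<ge> (INF Q\<in>{Q\<in>Delta a b (Borel_Theta a b). D Q P \<le> ennreal \<eta>}. integral\<^sup>L Q \<pi>)"
proof -
  note D = assms(3) and P = assms(4) and \<pi> = assms(6) and E = assms(8)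
  define S where "S = {Q\<in>Delta a b (Borel_Theta a b). D Q P \<le> ennreal \<eta>}"
  obtain C where C: "\<forall>x\<in>{a..b}. \<bar>\<pi> x\<bar> \<le> C"
    using assms(7) by blast
  interpret finite_measure_subalgebra P "restr P E"
    by (rule finite_measure_subalgebra_restr_Delta[OF P E])
  have "P \<in> S"
    using P divergence_self_eq_0[OF D P] by (simp add: S_def)
  moreover have "bdd_below ((\<lambda>Q. integral\<^sup>L Q \<pi>) ` S)"
    using integral_ge_neg_bound_Delta[OF _ \<pi> C] by (intro bdd_belowI2[where m="- C"]) (simp add: S_def)
  moreover have "\<exists>Q'\<in>S. integral\<^sup>L Q' \<pi> \<le> integral\<^sup>L Q (real_cond_exp P (restr P E) \<pi>)"
    if Q_S: "Q \<in> S" for Q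
  proof
    let ?Q' = "coarsen P (restr P E) Q"
    have Q: "Q \<in> Delta a b (Borel_Theta a b)" and DQ: "D Q P \<le> ennreal \<eta>"
      using Q_S by (simp_all add: S_def)
    have DQ_finite: "D Q P < \<infinity>"
      using DQ by (simp add: order_le_less_trans)
    have ac: "absolutely_continuous P Q"
      by (rule absolutely_continuous_if_divergence_finite[OF D P Q DQ_finite])
    have Q': "?Q' \<in> Delta a b (Borel_Theta a b)"
      by (rule coarsen_mem_Delta[OF P E Q ac])
    show "?Q' \<in> S"
      using Q' divergence_coarsen_le[OF P E D Q DQ_finite] DQ by (simp add: S_def)
    have "finite_measure Q" "sets Q = sets P"
      using P Q by (simp_all add: Delta_def prob_space_def)
    moreover have "\<pi> \<in> borel_measurable P"
      using P \<pi> by (simp add: Delta_def measurable_Borel_Theta)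
    ultimately show "integral\<^sup>L ?Q' \<pi> \<le> integral\<^sup>L Q (real_cond_exp P (restr P E) \<pi>)"
      using integral_coarsen ac integrable_bounded_Delta[OF Q' \<pi> C] by simp
  qed
  ultimately show ?thesis
    unfolding S_def[symmetric] by (intro cINF_mono) auto
qed

end
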